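(* Let $R$ be a Bézout domain and let $A,B,C\in R^{n\times n}$ satisfy $ABA=ACA$. If $AB$ and $CA$ are group invertible, then $(AB)^2(AB)^{D}$ is similar to $(CA)^2(CA)^{D}$.
   Context: A Bézout domain is an integral domain in which every finitely generated ideal is principal. A matrix $M\in R^{n\times n}$ is Drazin invertible if there exists $X\in R^{n\times n}$ with $MX=XM$, $XMX=X$ and $M^{m+1}X=M^m$ for some nonnegative integer $m$; such $X$ is unique and denoted $M^D$. $M$ is group invertible if this holds with $m=1$ (equivalently $MX=XM$, $XMX=X$, $MXM=M$). Two matrices $M,N\in R^{n\times n}$ are similar if $M=S^{-1}NS$ for some invertible $S\in R^{n\times n}$. *)

theory Defs
  imports "Jordan_Normal_Form.Matrix"
begin

definition ideal_gen :: "'a::comm_ring_1 set \<Rightarrow> 'a set" where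
  "ideal_gen S = {x. \<exists>f. x = (\<Sum>a\<in>S. f a * a)}"

definition bezout_domain :: "'a::idom itself \<Rightarrow> bool" where
  "bezout_domain _ \<longleftrightarrow>
     (\<forall>S::'a set. finite S \<longrightarrow> (\<exists>d. ideal_gen S = {d * r | r. True}))"

definition is_drazin_inverse :: "nat \<Rightarrow> 'a::comm_ring_1 mat \<Rightarrow> 'a mat \<Rightarrow> bool" where
  "is_drazin_inverse n M X \<longleftrightarrow> X \<in> carrier_mat n n \<and> M * X = X * M \<and> X * M * X = X \<and>
     (\<exists>m. M ^\<^sub>m (m + 1) * X = M ^\<^sub>m m)"

definition drazin_invertible :: "nat \<Rightarrow> 'a::comm_ring_1 mat \<Rightarrow> bool" where
  "drazin_invertible n M \<longleftrightarrow> (\<exists>X. is_drazin_inverse n M X)"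

definition drazin_inv :: "nat \<Rightarrow> 'a::comm_ring_1 mat \<Rightarrow> 'a mat" where
  "drazin_inv n M = (THE X. is_drazin_inverse n M X)"

text \<open>Group invertibility: the Drazin conditions with index m = 1.\<close>
definition group_invertible :: "nat \<Rightarrow> 'a::comm_ring_1 mat \<Rightarrow> bool" where
  "group_invertible n M \<longleftrightarrow> (\<exists>X. X \<in> carrier_mat n n \<and> M * X = X * M \<and> X * M * X = X \<and>
     M ^\<^sub>m 2 * X = M)"

end

(*
  Since AB and CA are group invertible, (AB)^2 (AB)^D = AB and (CA)^2 (CA)^D = CA, so the claim
  is that AB and CA are similar.  Let X, Y be the group inverses and P = AB X, Q = CA Y the
  associated idempotents.  From ABA = ACA one gets that U = A Q and V = Y C P satisfy UV = P,
  VU = Q, U = P U Q and V = Q V P, and that AB U = U CA.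

  Over a Bezout domain every idempotent matrix is similar to diag(1,...,1,0,...,0): a nonzero
  column v of E satisfies E v = v, and 2 x 2 unimodular transformations turn v into a multiple
  of the first unit vector, which makes the first column of the conjugate a unit column; a
  unipotent conjugation then clears the first row and one recurses on the remaining block.
  A determinant argument shows that two such diagonal idempotents related as above have the same
  rank, so P and Q are similar, say P S = S Q.  Finally T = U + S (1 - Q) is invertible with
  AB T = T CA.
*)
theory Submission
  imports Defs "Jordan_Normal_Form.Determinant"
begin

section \<open>Elementary transformations over a Bezout domain\<close>

lemma ideal_gen_pair: "ideal_gen {a, b} = {u * a + v * b | u v. True}"
proof (cases "a = b")
  case True
  have "(\<exists>f. x = f a * a) \<longleftrightarrow> (\<exists>u v. x = u * a + v * a)" for x
  proof
    assume "\<exists>u v. x = u * a + v * a"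
    then obtain u v where "x = u * a + v * a" by blast
    then show "\<exists>f. x = f a * a" by (intro exI[of _ "\<lambda>_. u + v"]) (simp add: distrib_right)
  next
    assume "\<exists>f. x = f a * a"
    then obtain f where "x = f a * a" by blast
    then show "\<exists>u v. x = u * a + v * a" by (intro exI[of _ "f a"] exI[of _ 0]) simp
  qed
  then show ?thesis using True by (simp add: ideal_gen_def)
next
  case False
  have "(\<exists>f. x = f a * a + f b * b) \<longleftrightarrow> (\<exists>u v. x = u * a + v * b)" for x
  proof
    assume "\<exists>u v. x = u * a + v * b"
    then obtain u v where "x = u * a + v * b" by blast
    then show "\<exists>f. x = f a * a + f b * b"
      using False by (intro exI[of _ "\<lambda>s. if s = a then u else v"]) auto
  qed blast
  then show ?thesis using False by (simp add: ideal_gen_def)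
qed

lemma bezout_domain_coprime_factors:
  fixes a b :: "'a::idom"
  assumes "bezout_domain TYPE('a)"
  obtains d a' b' x y where "a = d * a'" "b = d * b'" "x * a' + y * b' = 1"
proof -
  obtain d where d: "ideal_gen {a, b} = {d * r | r. True}"
    using assms unfolding bezout_domain_def by (meson finite.emptyI finite.insertI)
  have "a = 1 * a + 0 * b" "b = 0 * a + 1 * b" by simp_all
  then have "a \<in> ideal_gen {a, b}" "b \<in> ideal_gen {a, b}" unfolding ideal_gen_pair by blast+
  then obtain a' b' where ab: "a = d * a'" "b = d * b'" unfolding d by blast
  have "d \<in> ideal_gen {a, b}" unfolding d by (auto intro: exI[of _ 1])
  then obtain x y where "d = x * a + y * b" unfolding ideal_gen_pair by blast
  then have "d * (x * a' + y * b') = d * 1" using ab by (simp add: algebra_simps)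
  then consider "d = 0" | "x * a' + y * b' = 1" unfolding mult_cancel_left by blast
  then show thesis
  proof cases
    case 1
    then show thesis using ab that[of 0 1 0 1 0] by simp
  next
    case 2
    with ab show thesis by (rule that)
  qed
qed

lemma sum_single_support:
  fixes n :: nat
  assumes "i < n" "\<And>j. j < n \<Longrightarrow> j \<noteq> i \<Longrightarrow> f j = 0"
  shows "sum f {0..<n} = f i"
proof -
  have "sum f {0..<n} = sum f {i}" using assms by (intro sum.mono_neutral_right) auto
  then show ?thesis by simp
qed

lemma sum_pair_support:
  fixes n :: nat
  assumes "k < n" "l < n" "k \<noteq> l" "\<And>j. j < n \<Longrightarrow> j \<noteq> k \<Longrightarrow> j \<noteq> l \<Longrightarrow> f j = 0"
  shows "sum f {0..<n} = f k + f l"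
proof -
  have "sum f {0..<n} = sum f {k, l}" using assms by (intro sum.mono_neutral_right) auto
  then show ?thesis using assms(3) by simp
qed

lemma eq_mat_by_mult_vec:
  fixes A B :: "'a::semiring_1 mat"
  assumes "A \<in> carrier_mat nr nc" "B \<in> carrier_mat nr nc"
    and "\<And>u. u \<in> carrier_vec nc \<Longrightarrow> A *\<^sub>v u = B *\<^sub>v u"
  shows "A = B"
proof (rule eq_matI)
  fix i j assume "i < dim_row B" "j < dim_col B"
  then have "(A *\<^sub>v unit_vec nc j) $ i = (B *\<^sub>v unit_vec nc j) $ i" using assms by simp
  then show "A $$ (i, j) = B $$ (i, j)"
    using assms(1,2) \<open>i < dim_row B\<close> \<open>j < dim_col B\<close> by (simp add: carrier_matD)
qed (use assms in auto)

lemma mat_mult_left_right_inverse_comm: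
  fixes A B :: "'a::comm_ring_1 mat"
  assumes A: "A \<in> carrier_mat n n" and B: "B \<in> carrier_mat n n" and AB: "A * B = 1\<^sub>m n"
  shows "B * A = 1\<^sub>m n"
proof -
  have det: "det B * det A = 1" using det_mult[OF A B] AB by (simp add: mult.commute)
  have "adj_mat A = adj_mat A * (A * B)" using adj_mat(1)[OF A] by (simp add: AB right_mult_one_mat)
  also have "\<dots> = (adj_mat A * A) * B" using adj_mat(1)[OF A] A B by (simp add: assoc_mult_mat)
  also have "\<dots> = det A \<cdot>\<^sub>m B"
    using B by (simp add: adj_mat(3)[OF A] mult_smult_assoc_mat[OF one_carrier_mat B] left_mult_one_mat)
  finally have B_eq: "det B \<cdot>\<^sub>m adj_mat A = B"
    using B det by (intro eq_matI) (auto simp: mult.assoc[symmetric])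
  have "B * A = (det B \<cdot>\<^sub>m adj_mat A) * A" by (simp only: B_eq)
  also have "\<dots> = det B \<cdot>\<^sub>m (adj_mat A * A)" by (rule mult_smult_assoc_mat[OF adj_mat(1)[OF A] A])
  also have "\<dots> = 1\<^sub>m n" using det by (intro eq_matI) (auto simp: adj_mat(3)[OF A] mult.assoc[symmetric])
  finally show ?thesis .
qed

definition embed2_mat :: "nat \<Rightarrow> nat \<Rightarrow> nat \<Rightarrow> 'a \<Rightarrow> 'a \<Rightarrow> 'a \<Rightarrow> 'a \<Rightarrow> 'a::comm_ring_1 mat" where
  "embed2_mat n k l x y z w = mat n n (\<lambda>(i, j).
     if i = k then (if j = k then x else if j = l then y else 0)
     else if i = l then (if j = k then z else if j = l then w else 0)
     else if i = j then 1 else 0)"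

lemma embed2_mat_carrier [simp]: "embed2_mat n k l x y z w \<in> carrier_mat n n"
  and embed2_mat_dim [simp]: "dim_row (embed2_mat n k l x y z w) = n" "dim_col (embed2_mat n k l x y z w) = n"
  by (simp_all add: embed2_mat_def)

lemma embed2_mat_mult_vec:
  assumes "k < n" "l < n" "k \<noteq> l" "u \<in> carrier_vec n" "i < n"
  shows "(embed2_mat n k l x y z w *\<^sub>v u) $ i =
    (if i = k then x * u $ k + y * u $ l else if i = l then z * u $ k + w * u $ l else u $ i)"
proof -
  have "(embed2_mat n k l x y z w *\<^sub>v u) $ i = (\<Sum>j\<in>{0..<n}. embed2_mat n k l x y z w $$ (i, j) * u $ j)"
    using assms by (simp add: scalar_prod_def)
  also have "\<dots> = (if i = k then x * u $ k + y * u $ l else if i = l then z * u $ k + w * u $ l else u $ i)"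
  proof (cases "i = k \<or> i = l")
    case True
    then show ?thesis using assms by (subst sum_pair_support[of k n l]) (auto simp: embed2_mat_def)
  next
    case False
    then show ?thesis using assms by (subst sum_single_support[of i n]) (auto simp: embed2_mat_def)
  qed
  finally show ?thesis .
qed

lemma embed2_mat_adj_mult:
  assumes kl: "k < n" "l < n" "k \<noteq> l" and det: "x * w - y * z = 1"
  shows "embed2_mat n k l w (- y) (- z) x * embed2_mat n k l x y z w = 1\<^sub>m n"
proof (rule eq_mat_by_mult_vec[where nr = n])
  fix u :: "'a vec" assume u: "u \<in> carrier_vec n"
  define v where "v = embed2_mat n k l x y z w *\<^sub>v u"
  have v: "v \<in> carrier_vec n" unfolding v_def by (rule mult_mat_vec_carrier[OF embed2_mat_carrier u])
  have v_index: "v $ j = (if j = k then x * u $ k + y * u $ l else if j = l then z * u $ k + w * u $ l else u $ j)"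
    if "j < n" for j
    unfolding v_def using embed2_mat_mult_vec[OF kl u that] .
  have "embed2_mat n k l w (- y) (- z) x *\<^sub>v v = u"
  proof (rule eq_vecI)
    fix i assume "i < dim_vec u"
    then have i: "i < n" using u by simp
    have F_v: "(embed2_mat n k l w (- y) (- z) x *\<^sub>v v) $ i =
      (if i = k then w * v $ k + - y * v $ l else if i = l then - z * v $ k + x * v $ l else v $ i)"
      by (rule embed2_mat_mult_vec[OF kl v i])
    have "w * v $ k + - y * v $ l = (x * w - y * z) * u $ k"
      "- z * v $ k + x * v $ l = (x * w - y * z) * u $ l"
      using kl by (simp_all add: v_index algebra_simps)
    then show "(embed2_mat n k l w (- y) (- z) x *\<^sub>v v) $ i = u $ i"
      unfolding F_v det using v_index[OF i] by simp
  qed (use u v in simp)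
  then show "(embed2_mat n k l w (- y) (- z) x * embed2_mat n k l x y z w) *\<^sub>v u = 1\<^sub>m n *\<^sub>v u"
    using u by (simp add: v_def assoc_mult_mat_vec[OF embed2_mat_carrier embed2_mat_carrier u])
qed (rule mult_carrier_mat[OF embed2_mat_carrier embed2_mat_carrier], simp)

lemma mult_inverse_mats:
  fixes A B C D :: "'a::semiring_1 mat"
  assumes "A \<in> carrier_mat n n" "B \<in> carrier_mat n n" "C \<in> carrier_mat n n" "D \<in> carrier_mat n n"
    and "A * B = 1\<^sub>m n" "C * D = 1\<^sub>m n"
  shows "A * C * (D * B) = 1\<^sub>m n"
proof -
  have "A * C * (D * B) = A * (C * D) * B"
    using assms(1-4) by (simp add: assoc_mult_mat[of _ n n _ n _ n])
  then show ?thesis using assms by (simp add: right_mult_one_mat[OF assms(1)])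
qed

lemma bezout_eliminate_entry:
  fixes u :: "'a::idom vec"
  assumes bz: "bezout_domain TYPE('a)" and u: "u \<in> carrier_vec n"
    and kl: "k < n" "l < n" "k \<noteq> l"
  obtains E F where "E \<in> carrier_mat n n" "F \<in> carrier_mat n n" "E * F = 1\<^sub>m n" "F * E = 1\<^sub>m n"
    "(E *\<^sub>v u) $ l = 0" "\<And>i. i < n \<Longrightarrow> i \<noteq> k \<Longrightarrow> i \<noteq> l \<Longrightarrow> (E *\<^sub>v u) $ i = u $ i"
proof -
  obtain d a' b' x y where ab: "u $ k = d * a'" "u $ l = d * b'" and xy: "x * a' + y * b' = 1"
    using bezout_domain_coprime_factors[OF bz] by blast
  define E where "E = embed2_mat n k l x y (- b') a'"
  define F where "F = embed2_mat n k l a' (- y) b' x"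
  have E: "E \<in> carrier_mat n n" and F: "F \<in> carrier_mat n n" by (simp_all add: E_def F_def)
  have FE: "F * E = 1\<^sub>m n"
    using embed2_mat_adj_mult[OF kl, where x = x and y = y and z = "- b'" and w = a'] xy
    by (simp add: E_def F_def)
  have "(E *\<^sub>v u) $ l = 0"
    using embed2_mat_mult_vec[OF kl u kl(2)] kl(3) ab by (simp add: E_def algebra_simps)
  moreover have "(E *\<^sub>v u) $ i = u $ i" if "i < n" "i \<noteq> k" "i \<noteq> l" for i
    using embed2_mat_mult_vec[OF kl u that(1)] that by (simp add: E_def)
  ultimately show thesis using that[OF E F mat_mult_left_right_inverse_comm[OF F E FE] FE] by blast
qed

lemma bezout_reduce_vec:
  fixes u :: "'a::idom vec"
  assumes bz: "bezout_domain TYPE('a)" and u: "u \<in> carrier_vec n"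
  obtains G H where "G \<in> carrier_mat n n" "H \<in> carrier_mat n n" "G * H = 1\<^sub>m n" "H * G = 1\<^sub>m n"
    "\<And>i. 0 < i \<Longrightarrow> i < n \<Longrightarrow> (G *\<^sub>v u) $ i = 0"
proof -
  have "\<exists>G H. G \<in> carrier_mat n n \<and> H \<in> carrier_mat n n \<and> G * H = 1\<^sub>m n \<and> H * G = 1\<^sub>m n \<and>
      (\<forall>i. 0 < i \<and> i < m \<and> i < n \<longrightarrow> (G *\<^sub>v u) $ i = 0)" for m
  proof (induction m)
    case 0
    show ?case by (intro exI[of _ "1\<^sub>m n"]) auto
  next
    case (Suc m)
    then obtain G H where G: "G \<in> carrier_mat n n" and H: "H \<in> carrier_mat n n"
      and GH: "G * H = 1\<^sub>m n" and HG: "H * G = 1\<^sub>m n"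
      and zero: "\<forall>i. 0 < i \<and> i < m \<and> i < n \<longrightarrow> (G *\<^sub>v u) $ i = 0" by blast
    show ?case
    proof (cases "0 < m \<and> m < n")
      case False
      then show ?thesis using G H GH HG zero by (intro exI[of _ G] exI[of _ H]) (auto simp: less_Suc_eq)
    next
      case True
      have Gu: "G *\<^sub>v u \<in> carrier_vec n" using G u by simp
      obtain E F where E: "E \<in> carrier_mat n n" and F: "F \<in> carrier_mat n n"
        and EF: "E * F = 1\<^sub>m n" and FE: "F * E = 1\<^sub>m n" and elim: "(E *\<^sub>v (G *\<^sub>v u)) $ m = 0"
        and keep: "\<And>i. i < n \<Longrightarrow> i \<noteq> 0 \<Longrightarrow> i \<noteq> m \<Longrightarrow> (E *\<^sub>v (G *\<^sub>v u)) $ i = (G *\<^sub>v u) $ i"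
        using bezout_eliminate_entry[OF bz Gu, of 0 m] True by blast
      have zero': "\<forall>i. 0 < i \<and> i < Suc m \<and> i < n \<longrightarrow> (E * G *\<^sub>v u) $ i = 0"
      proof (intro allI impI)
        fix i assume i: "0 < i \<and> i < Suc m \<and> i < n"
        have "(E * G *\<^sub>v u) $ i = (E *\<^sub>v (G *\<^sub>v u)) $ i" using E G u by simp
        also have "\<dots> = 0" using i elim keep[of i] zero by (cases "i = m") auto
        finally show "(E * G *\<^sub>v u) $ i = 0" .
      qed
      have "E * G \<in> carrier_mat n n" "H * F \<in> carrier_mat n n" using E F G H by auto
      with mult_inverse_mats[OF E F G H EF GH] mult_inverse_mats[OF H G F E HG FE] zero'
      show ?thesis by blast
    qed
  qed
  then obtain G H where "G \<in> carrier_mat n n" "H \<in> carrier_mat n n" "G * H = 1\<^sub>m n" "H * G = 1\<^sub>m n"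
    "\<forall>i. 0 < i \<and> i < n \<and> i < n \<longrightarrow> (G *\<^sub>v u) $ i = 0" by blast
  then show thesis by (intro that[of G H]) auto
qed

section \<open>Idempotent matrices are similar to diagonal ones\<close>

definition proj_mat :: "nat \<Rightarrow> nat \<Rightarrow> 'a::zero_neq_one mat" where
  "proj_mat n r = mat n n (\<lambda>(i, j). if i = j \<and> i < r then 1 else 0)"

lemma proj_mat_carrier [simp]: "proj_mat n r \<in> carrier_mat n n"
  and proj_mat_dim [simp]: "dim_row (proj_mat n r) = n" "dim_col (proj_mat n r) = n"
  and proj_mat_index [simp]: "i < n \<Longrightarrow> j < n \<Longrightarrow> proj_mat n r $$ (i, j) = (if i = j \<and> i < r then 1 else 0)"
  by (simp_all add: proj_mat_def)

lemma proj_mat_mult_index: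
  fixes X :: "'a::semiring_1 mat"
  assumes "X \<in> carrier_mat n nc" "i < n" "j < nc"
  shows "(proj_mat n r * X) $$ (i, j) = (if i < r then X $$ (i, j) else 0)"
proof -
  have "(proj_mat n r * X) $$ (i, j) = (\<Sum>m\<in>{0..<n}. proj_mat n r $$ (i, m) * X $$ (m, j))"
    using assms by (simp add: scalar_prod_def)
  also have "\<dots> = proj_mat n r $$ (i, i) * X $$ (i, j)"
    using assms by (intro sum_single_support) auto
  finally show ?thesis using assms by simp
qed

lemma mult_proj_mat_index:
  fixes X :: "'a::semiring_1 mat"
  assumes "X \<in> carrier_mat nr n" "i < nr" "j < n"
  shows "(X * proj_mat n r) $$ (i, j) = (if j < r then X $$ (i, j) else 0)"
proof -
  have "(X * proj_mat n r) $$ (i, j) = (\<Sum>m\<in>{0..<n}. X $$ (i, m) * proj_mat n r $$ (m, j))"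
    using assms by (simp add: scalar_prod_def)
  also have "\<dots> = X $$ (i, j) * proj_mat n r $$ (j, j)"
    using assms by (intro sum_single_support) auto
  finally show ?thesis using assms by simp
qed

lemma proj_mat_mult_proj_mat: "proj_mat n r * proj_mat n s = (proj_mat n (min r s) :: 'a::semiring_1 mat)"
  by (rule eq_matI) (auto simp: proj_mat_mult_index[OF proj_mat_carrier] simp del: index_mult_mat(1))

lemma proj_mat_zero: "proj_mat n 0 = 0\<^sub>m n n"
  by (rule eq_matI) auto

lemma four_block_proj_mat:
  "four_block_mat (1\<^sub>m 1) (0\<^sub>m 1 n) (0\<^sub>m n 1) (proj_mat n r) = proj_mat (Suc n) (Suc r)"
  by (rule eq_matI) auto

lemma minus_zero_mat [simp]: "(A :: 'a::group_add mat) \<in> carrier_mat nr nc \<Longrightarrow> A - 0\<^sub>m nr nc = A"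
  by (intro eq_matI) auto

lemma right_mult_compl_zero:
  fixes X Q :: "'a::comm_ring_1 mat"
  assumes "X \<in> carrier_mat m n" "Q \<in> carrier_mat n n" "X * Q = X"
  shows "X * (1\<^sub>m n - Q) = 0\<^sub>m m n"
  using assms by (simp add: mult_minus_distrib_mat[of _ m n _ n] right_mult_one_mat)

lemma left_mult_compl_zero:
  fixes X Q :: "'a::comm_ring_1 mat"
  assumes "X \<in> carrier_mat n m" "Q \<in> carrier_mat n n" "Q * X = X"
  shows "(1\<^sub>m n - Q) * X = 0\<^sub>m n m"
  using assms by (simp add: minus_mult_distrib_mat[of _ n n _ _ m] left_mult_one_mat)

lemma compl_idempotent:
  fixes Q :: "'a::comm_ring_1 mat"
  assumes "Q \<in> carrier_mat n n" "Q * Q = Q"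
  shows "(1\<^sub>m n - Q) * (1\<^sub>m n - Q) = 1\<^sub>m n - Q"
proof -
  have "(1\<^sub>m n - Q) * (1\<^sub>m n - Q) = (1\<^sub>m n - Q) - (1\<^sub>m n - Q) * Q"
    using assms by (simp add: mult_minus_distrib_mat[of _ n n _ n] minus_carrier_mat right_mult_one_mat)
  also have "(1\<^sub>m n - Q) * Q = 0\<^sub>m n n" using left_mult_compl_zero assms by blast
  finally show ?thesis using assms(1) by (simp add: minus_carrier_mat)
qed

lemma similar_mat_wit_idempotent:
  assumes "similar_mat_wit A B P Q" "B * B = B"
  shows "A * A = A"
proof -
  define n where "n = dim_row A"
  from similar_mat_witD[OF n_def assms(1)] have B: "B \<in> carrier_mat n n"
    and P: "P \<in> carrier_mat n n" and Q: "Q \<in> carrier_mat n n"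
    and QP: "Q * P = 1\<^sub>m n" and A: "A = P * B * Q" by auto
  have "A * A = P * (B * (Q * P) * B) * Q"
    unfolding A using B P Q by (simp add: assoc_mult_mat[of _ n n _ n _ n])
  also have "\<dots> = A" unfolding QP A using B assms(2) by (simp add: right_mult_one_mat)
  finally show ?thesis .
qed

lemma mult_mat_vec_first_support:
  assumes w: "w \<in> carrier_vec n" and A: "A \<in> carrier_mat m n" and "0 < n"
    and zero: "\<And>j. 0 < j \<Longrightarrow> j < n \<Longrightarrow> w $ j = 0" and "i < m"
  shows "(A *\<^sub>v w) $ i = A $$ (i, 0) * w $ 0"
proof -
  have "(A *\<^sub>v w) $ i = (\<Sum>j\<in>{0..<n}. A $$ (i, j) * w $ j)" using assms by (simp add: scalar_prod_def)
  also have "\<dots> = A $$ (i, 0) * w $ 0" using assms by (intro sum_single_support) auto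
  finally show ?thesis .
qed

lemma bezout_conj_first_col_unit:
  fixes E :: "'a::idom mat"
  assumes bz: "bezout_domain TYPE('a)" and E: "E \<in> carrier_mat n n"
    and v: "v \<in> carrier_vec n" "v \<noteq> 0\<^sub>v n" and Ev: "E *\<^sub>v v = v"
  obtains G H where "G \<in> carrier_mat n n" "H \<in> carrier_mat n n" "G * H = 1\<^sub>m n" "H * G = 1\<^sub>m n"
    "G * E * H * proj_mat n 1 = proj_mat n 1"
proof -
  obtain G H where G: "G \<in> carrier_mat n n" and H: "H \<in> carrier_mat n n"
    and GH: "G * H = 1\<^sub>m n" and HG: "H * G = 1\<^sub>m n" and zero: "\<And>i. 0 < i \<Longrightarrow> i < n \<Longrightarrow> (G *\<^sub>v v) $ i = 0"
    using bezout_reduce_vec[OF bz v(1)] by blast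
  define w where "w = G *\<^sub>v v"
  have w: "w \<in> carrier_vec n" using G v by (simp add: w_def)
  have "0 < n"
  proof (rule ccontr)
    assume "\<not> 0 < n"
    then have "v = 0\<^sub>v n" using v(1) by (intro eq_vecI) auto
    with v(2) show False ..
  qed
  have mult_w: "(A *\<^sub>v w) $ i = A $$ (i, 0) * w $ 0" if "A \<in> carrier_mat n n" "i < n" for A i
    by (rule mult_mat_vec_first_support[OF w that(1) \<open>0 < n\<close> _ that(2)]) (use zero in \<open>simp add: w_def\<close>)
  have "H *\<^sub>v w = (H * G) *\<^sub>v v" using G H v by (simp add: w_def)
  then have "H *\<^sub>v w = v" using HG v by simp
  have "w $ 0 \<noteq> 0"
  proof
    assume "w $ 0 = 0"
    then have "H *\<^sub>v w = 0\<^sub>v n" using H by (intro eq_vecI) (auto simp: mult_w simp del: index_mult_mat_vec)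
    with \<open>H *\<^sub>v w = v\<close> v(2) show False by simp
  qed
  define E1 where "E1 = G * E * H"
  have E1: "E1 \<in> carrier_mat n n" using G E H by (simp add: E1_def)
  have "E1 *\<^sub>v w = G *\<^sub>v (E *\<^sub>v (H *\<^sub>v w))" using G E H w by (simp add: E1_def assoc_mult_mat_vec[of _ n n _ n])
  also have "\<dots> = G *\<^sub>v (E *\<^sub>v v)" by (simp only: \<open>H *\<^sub>v w = v\<close>)
  also have "\<dots> = w" by (simp add: Ev w_def)
  finally have "E1 *\<^sub>v w = w" .
  then have "E1 $$ (i, 0) * w $ 0 = (if i = 0 then 1 else 0) * w $ 0" if "i < n" for i
    using mult_w[OF E1 that] zero[of i] that by (auto simp: w_def)
  then have "E1 $$ (i, 0) = (if i = 0 then 1 else 0)" if "i < n" for i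
    using \<open>w $ 0 \<noteq> 0\<close> that mult_cancel_right by blast
  then have "E1 * proj_mat n 1 = proj_mat n 1"
    using E1 by (intro eq_matI) (auto simp: mult_proj_mat_index simp del: index_mult_mat(1))
  then show thesis using that[OF G H GH HG] by (simp add: E1_def)
qed

lemma idempotent_similar_first_col_unit:
  fixes E :: "'a::idom mat"
  assumes bz: "bezout_domain TYPE('a)" and E: "E \<in> carrier_mat n n" and EE: "E * E = E"
    and nz: "E \<noteq> 0\<^sub>m n n"
  obtains E' where "similar_mat E E'" "E' \<in> carrier_mat n n" "E' * E' = E'"
    "E' * proj_mat n 1 = proj_mat n 1"
proof -
  have "\<exists>j<n. col E j \<noteq> 0\<^sub>v n"
  proof (rule ccontr)
    assume none: "\<not> ?thesis"
    have "E $$ (i, j) = 0" if "i < n" "j < n" for i j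
    proof -
      have "col E j $ i = 0" using none that by auto
      then show ?thesis using that E by simp
    qed
    then have "E = 0\<^sub>m n n" using E by (intro eq_matI) auto
    with nz show False ..
  qed
  then obtain j where j: "j < n" "col E j \<noteq> 0\<^sub>v n" by blast
  have "E *\<^sub>v col E j = col E j" using col_mult2[OF E E j(1)] EE by simp
  then obtain G H where G: "G \<in> carrier_mat n n" and H: "H \<in> carrier_mat n n"
    and GH: "G * H = 1\<^sub>m n" and HG: "H * G = 1\<^sub>m n" and unit: "G * E * H * proj_mat n 1 = proj_mat n 1"
    using bezout_conj_first_col_unit[OF bz E _ j(2)] E j(1) by auto
  have wit: "similar_mat_wit (G * E * H) E G H"
    using G E H GH HG by (intro similar_mat_witI) auto
  then have "similar_mat E (G * E * H)" using similar_mat_wit_sym unfolding similar_mat_def by blast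
  then show thesis
    using that similar_mat_wit_idempotent[OF wit EE] unit G E H by auto
qed

lemma first_row_clearing_props:
  fixes E :: "'a::comm_ring_1 mat" and n :: nat
  defines "D \<equiv> proj_mat n 1"
  defines "N \<equiv> D * (E - 1\<^sub>m n)"
  assumes E: "E \<in> carrier_mat n n" and EE: "E * E = E" and ED: "E * D = D"
  shows "N \<in> carrier_mat n n" "E * N = N" "N * E = 0\<^sub>m n n" "N * D = 0\<^sub>m n n" "D * N = N"
    "N * N = 0\<^sub>m n n"
proof -
  note assoc = assoc_mult_mat[of _ n n _ n _ n]
  have D: "D \<in> carrier_mat n n" and E1: "E - 1\<^sub>m n \<in> carrier_mat n n"
    using E by (auto simp: D_def minus_carrier_mat)
  show N: "N \<in> carrier_mat n n" using D E1 by (simp add: N_def)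
  show "E * N = N" unfolding N_def using E D E1 ED by (simp flip: assoc)
  have "(E - 1\<^sub>m n) * E = 0\<^sub>m n n"
    using E EE by (simp add: minus_mult_distrib_mat[of _ n n _ _ n] left_mult_one_mat)
  then show "N * E = 0\<^sub>m n n" unfolding N_def using D E1 E by (simp add: assoc right_mult_zero_mat)
  have "(E - 1\<^sub>m n) * D = 0\<^sub>m n n"
    using E D ED by (simp add: minus_mult_distrib_mat[of _ n n _ _ n] left_mult_one_mat)
  then show ND: "N * D = 0\<^sub>m n n" unfolding N_def using D E1 by (simp add: assoc right_mult_zero_mat)
  have "D * D = D" by (simp add: D_def proj_mat_mult_proj_mat)
  then show "D * N = N" unfolding N_def using D E1 by (simp flip: assoc)
  have "N * N = D * (((E - 1\<^sub>m n) * D) * (E - 1\<^sub>m n))" unfolding N_def using D E1 by (simp add: assoc)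
  then show "N * N = 0\<^sub>m n n"
    using \<open>(E - 1\<^sub>m n) * D = 0\<^sub>m n n\<close> D E1 by (simp add: left_mult_zero_mat right_mult_zero_mat)
qed

lemma unipotent_mult_inverse:
  fixes N :: "'a::comm_ring_1 mat"
  assumes N: "N \<in> carrier_mat n n" and NN: "N * N = 0\<^sub>m n n"
  shows "(1\<^sub>m n + N) * (1\<^sub>m n - N) = 1\<^sub>m n" "(1\<^sub>m n - N) * (1\<^sub>m n + N) = 1\<^sub>m n"
proof -
  have "(1\<^sub>m n + N) * (1\<^sub>m n - N) = (1\<^sub>m n + N) * 1\<^sub>m n - (1\<^sub>m n + N) * N"
    using N by (intro mult_minus_distrib_mat) auto
  also have "(1\<^sub>m n + N) * 1\<^sub>m n = 1\<^sub>m n + N" using N by (intro right_mult_one_mat) auto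
  also have "(1\<^sub>m n + N) * N = N + N * N"
    using N by (simp add: add_mult_distrib_mat[OF one_carrier_mat N N] left_mult_one_mat)
  also have "1\<^sub>m n + N - (N + N * N) = 1\<^sub>m n" using N NN by (intro eq_matI) auto
  finally show "(1\<^sub>m n + N) * (1\<^sub>m n - N) = 1\<^sub>m n" .
  then show "(1\<^sub>m n - N) * (1\<^sub>m n + N) = 1\<^sub>m n"
    by (rule mat_mult_left_right_inverse_comm[rotated 2]) (use N in \<open>auto simp: minus_carrier_mat\<close>)
qed

(* N is the first row of E - 1; conjugating by 1 + N clears the first row and keeps the first column. *)
lemma idempotent_similar_first_row_col_unit:
  fixes E :: "'a::comm_ring_1 mat"
  assumes E: "E \<in> carrier_mat n n" and EE: "E * E = E" and ED: "E * proj_mat n 1 = proj_mat n 1"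
  obtains E' where "similar_mat E E'" "E' \<in> carrier_mat n n" "E' * E' = E'"
    "E' * proj_mat n 1 = proj_mat n 1" "proj_mat n 1 * E' = proj_mat n 1"
proof -
  define D :: "'a mat" where "D = proj_mat n 1"
  define N where "N = D * (E - 1\<^sub>m n)"
  have D: "D \<in> carrier_mat n n" by (simp add: D_def)
  have N: "N \<in> carrier_mat n n" "E * N = N" "N * E = 0\<^sub>m n n" "N * D = 0\<^sub>m n n" "D * N = N" "N * N = 0\<^sub>m n n"
    using first_row_clearing_props[OF E EE ED] by (simp_all add: D_def N_def)
  define E' where "E' = (1\<^sub>m n + N) * E * (1\<^sub>m n - N)"
  have "(1\<^sub>m n + N) * E = E" using E N by (simp add: add_mult_distrib_mat[of _ n n _ _ n] left_mult_one_mat)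
  then have E'_eq: "E' = E - N"
    using E N by (simp add: E'_def mult_minus_distrib_mat[of _ n n _ n] right_mult_one_mat)
  have E': "E' \<in> carrier_mat n n" using E N by (simp add: E'_eq minus_carrier_mat)
  have wit: "similar_mat_wit E' E (1\<^sub>m n + N) (1\<^sub>m n - N)"
    using E N unipotent_mult_inverse[OF N(1,6)] by (intro similar_mat_witI[of _ _ n]) (auto simp: E'_def minus_carrier_mat)
  have "E' * D = D" using E N D ED by (simp add: E'_eq D_def minus_mult_distrib_mat[of _ n n _ _ n])
  moreover have "D * E' = D * E - D * (E - 1\<^sub>m n)"
    using E N D by (simp add: E'_eq mult_minus_distrib_mat[of _ n n _ n] flip: N_def)
  then have "D * E' = D" using E D by (intro eq_matI) (auto simp: mult_minus_distrib_mat[of _ n n _ n] right_mult_one_mat)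
  moreover have "similar_mat E E'" using similar_mat_wit_sym[OF wit] unfolding similar_mat_def by blast
  ultimately show thesis using that E' similar_mat_wit_idempotent[OF wit EE] by (simp add: D_def)
qed

lemma four_block_of_first_row_col_unit:
  fixes E :: "'a::comm_ring_1 mat"
  assumes E: "E \<in> carrier_mat (Suc n) (Suc n)"
    and ED: "E * proj_mat (Suc n) 1 = proj_mat (Suc n) 1" and DE: "proj_mat (Suc n) 1 * E = proj_mat (Suc n) 1"
  shows "E = four_block_mat (1\<^sub>m 1) (0\<^sub>m 1 n) (0\<^sub>m n 1) (mat n n (\<lambda>(i, j). E $$ (Suc i, Suc j)))"
proof (rule eq_matI)
  have row: "E $$ (0, j) = (if j = 0 then 1 else 0)" if "j < Suc n" for j
    using arg_cong[OF DE, of "\<lambda>X. X $$ (0, j)"] proj_mat_mult_index[OF E _ that, of 0 1] that by simp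
  have col: "E $$ (i, 0) = (if i = 0 then 1 else 0)" if "i < Suc n" for i
    using arg_cong[OF ED, of "\<lambda>X. X $$ (i, 0)"] mult_proj_mat_index[OF E that, of 0 1] that by simp
  fix i j
  assume "i < dim_row (four_block_mat (1\<^sub>m 1) (0\<^sub>m 1 n) (0\<^sub>m n 1) (mat n n (\<lambda>(i, j). E $$ (Suc i, Suc j))))"
    "j < dim_col (four_block_mat (1\<^sub>m 1) (0\<^sub>m 1 n) (0\<^sub>m n 1) (mat n n (\<lambda>(i, j). E $$ (Suc i, Suc j))))"
  then have "i < Suc n" "j < Suc n" by simp_all
  then show "E $$ (i, j) = four_block_mat (1\<^sub>m 1) (0\<^sub>m 1 n) (0\<^sub>m n 1) (mat n n (\<lambda>(i, j). E $$ (Suc i, Suc j))) $$ (i, j)"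
    using row col by (cases i; cases j) auto
qed (use E in auto)

lemma four_block_idempotent_lower:
  fixes A :: "'a::comm_ring_1 mat"
  assumes A: "A \<in> carrier_mat n n"
    and idem: "four_block_mat (1\<^sub>m 1) (0\<^sub>m 1 n) (0\<^sub>m n 1) A * four_block_mat (1\<^sub>m 1) (0\<^sub>m 1 n) (0\<^sub>m n 1) A
      = four_block_mat (1\<^sub>m 1) (0\<^sub>m 1 n) (0\<^sub>m n 1) A"
  shows "A * A = A"
proof -
  have "four_block_mat (1\<^sub>m 1) (0\<^sub>m 1 n) (0\<^sub>m n 1) A * four_block_mat (1\<^sub>m 1) (0\<^sub>m 1 n) (0\<^sub>m n 1) A
      = four_block_mat (1\<^sub>m 1) (0\<^sub>m 1 n) (0\<^sub>m n 1) (A * A)"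
    using A by (simp add: mult_four_block_mat[OF one_carrier_mat zero_carrier_mat zero_carrier_mat A
      one_carrier_mat zero_carrier_mat zero_carrier_mat A] left_mult_zero_mat right_mult_zero_mat)
  then have eq: "four_block_mat (1\<^sub>m 1) (0\<^sub>m 1 n) (0\<^sub>m n 1) (A * A) = four_block_mat (1\<^sub>m 1) (0\<^sub>m 1 n) (0\<^sub>m n 1) A"
    using idem by simp
  show ?thesis
  proof (rule eq_matI)
    fix i j assume "i < dim_row A" "j < dim_col A"
    then show "(A * A) $$ (i, j) = A $$ (i, j)"
      using arg_cong[OF eq, of "\<lambda>X. X $$ (Suc i, Suc j)"] A by simp
  qed (use A in auto)
qed

lemma idempotent_similar_proj_mat:
  fixes E :: "'a::idom mat"
  assumes bz: "bezout_domain TYPE('a)"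
  shows "E \<in> carrier_mat n n \<Longrightarrow> E * E = E \<Longrightarrow> \<exists>r\<le>n. similar_mat E (proj_mat n r)"
proof (induction n arbitrary: E)
  case 0
  then have "E = proj_mat 0 0" by (intro eq_matI) auto
  then show ?case using similar_mat_refl[OF proj_mat_carrier] by auto
next
  case (Suc n)
  show ?case
  proof (cases "E = 0\<^sub>m (Suc n) (Suc n)")
    case True
    then show ?thesis using similar_mat_refl[of E "Suc n"] by (auto simp: proj_mat_zero)
  next
    case False
    obtain E1 where E1: "similar_mat E E1" "E1 \<in> carrier_mat (Suc n) (Suc n)" "E1 * E1 = E1"
      "E1 * proj_mat (Suc n) 1 = proj_mat (Suc n) 1"
      using idempotent_similar_first_col_unit[OF bz Suc.prems False] .
    obtain E2 where E2: "similar_mat E1 E2" "E2 \<in> carrier_mat (Suc n) (Suc n)" "E2 * E2 = E2"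
      "E2 * proj_mat (Suc n) 1 = proj_mat (Suc n) 1" "proj_mat (Suc n) 1 * E2 = proj_mat (Suc n) 1"
      using idempotent_similar_first_row_col_unit[OF E1(2-4)] .
    define A where "A = mat n n (\<lambda>(i, j). E2 $$ (Suc i, Suc j))"
    have A: "A \<in> carrier_mat n n" by (simp add: A_def)
    have E2_block: "E2 = four_block_mat (1\<^sub>m 1) (0\<^sub>m 1 n) (0\<^sub>m n 1) A"
      unfolding A_def by (rule four_block_of_first_row_col_unit[OF E2(2,4,5)])
    have "A * A = A" using E2(3) unfolding E2_block by (rule four_block_idempotent_lower[OF A])
    then obtain r where r: "r \<le> n" "similar_mat A (proj_mat n r)" using Suc.IH[OF A] by blast
    have "similar_mat E2 (proj_mat (Suc n) (Suc r))"
      unfolding E2_block four_block_proj_mat[symmetric]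
      by (rule similar_mat_four_block_0_0[OF similar_mat_refl[OF one_carrier_mat] r(2) one_carrier_mat A])
    then show ?thesis using E1(1) E2(1) r(1) similar_mat_trans by (intro exI[of _ "Suc r"]) blast
  qed
qed

section \<open>Equivalent idempotents\<close>

lemma det_zero_row:
  fixes A :: "'a::comm_ring_1 mat"
  assumes A: "A \<in> carrier_mat n n" and k: "k < n" and zero: "\<And>j. j < n \<Longrightarrow> A $$ (k, j) = 0"
  shows "det A = 0"
proof -
  have "A = mat\<^sub>r n n (\<lambda>i. if i = k then 0\<^sub>v n else row A i)"
    using A zero by (intro eq_matI) auto
  also have "det \<dots> = 0" using A by (intro det_row_0[OF k]) auto
  finally show ?thesis .
qed

(* Murray-von Neumann equivalence of the idempotents P and Q. *)
definition idempotents_equivalent :: "nat \<Rightarrow> 'a::semiring_1 mat \<Rightarrow> 'a mat \<Rightarrow> 'a mat \<Rightarrow> 'a mat \<Rightarrow> bool" where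
  "idempotents_equivalent n P Q U V \<longleftrightarrow> U \<in> carrier_mat n n \<and> V \<in> carrier_mat n n \<and>
     U * V = P \<and> V * U = Q \<and> P * U = U \<and> U * Q = U \<and> Q * V = V \<and> V * P = V"

lemma idempotents_equivalent_sym:
  "idempotents_equivalent n P Q U V \<Longrightarrow> idempotents_equivalent n Q P V U"
  by (auto simp: idempotents_equivalent_def)

lemma idempotents_equivalentD:
  assumes "idempotents_equivalent n P Q U V"
  shows "P \<in> carrier_mat n n" "Q \<in> carrier_mat n n" "P * P = P" "Q * Q = Q"
proof -
  from assms have U: "U \<in> carrier_mat n n" and V: "V \<in> carrier_mat n n"
    and UV: "U * V = P" and VU: "V * U = Q" and PU: "P * U = U" and QV: "Q * V = V"
    by (auto simp: idempotents_equivalent_def)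
  show P: "P \<in> carrier_mat n n" and Q: "Q \<in> carrier_mat n n"
    using U V by (simp_all flip: UV VU)
  have "P * P = P * U * V" using P U V by (simp add: assoc_mult_mat[of _ n n _ n _ n] UV)
  then show "P * P = P" by (simp add: PU UV)
  have "Q * Q = Q * V * U" using Q U V by (simp add: assoc_mult_mat[of _ n n _ n _ n] VU)
  then show "Q * Q = Q" by (simp add: QV VU)
qed

lemma idempotents_equivalent_similar_left:
  fixes P :: "'a::semiring_1 mat"
  assumes eq: "idempotents_equivalent n P Q U V" and wit: "similar_mat_wit P P' S T"
  shows "idempotents_equivalent n P' Q (T * U) (V * S)"
proof -
  note assoc = assoc_mult_mat[of _ n n _ n _ n]
  from eq have U: "U \<in> carrier_mat n n" and V: "V \<in> carrier_mat n n"
    and UV: "U * V = P" and VU: "V * U = Q" and PU: "P * U = U" and UQ: "U * Q = U"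
    and QV: "Q * V = V" and VP: "V * P = V"
    by (auto simp: idempotents_equivalent_def)
  have P: "P \<in> carrier_mat n n" using idempotents_equivalentD[OF eq] by simp
  from similar_mat_witD2[OF P wit] have ST: "S * T = 1\<^sub>m n" and TS: "T * S = 1\<^sub>m n"
    and P_eq: "P = S * P' * T" and P': "P' \<in> carrier_mat n n" and S: "S \<in> carrier_mat n n"
    and T: "T \<in> carrier_mat n n" by auto
  have "T * P * S = (T * S) * P' * (T * S)" using S T P' by (simp add: assoc P_eq)
  then have P'_eq: "P' = T * P * S" using P' by (simp add: TS left_mult_one_mat right_mult_one_mat)
  have "T * U * (V * S) = T * (U * V) * S" using T U V S by (simp add: assoc)
  moreover have "V * S * (T * U) = V * (S * T) * U" using T U V S by (simp add: assoc)
  moreover have "P' * (T * U) = T * (P * (S * T) * U)" using T U P S by (simp add: assoc P'_eq)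
  moreover have "T * U * Q = T * (U * Q)" using T U VU V by (simp add: assoc flip: VU)
  moreover have "Q * (V * S) = Q * V * S" using V S VU U by (simp add: assoc flip: VU)
  moreover have "V * S * P' = V * (S * T) * P * S" using V S T P by (simp add: assoc P'_eq)
  ultimately show ?thesis unfolding idempotents_equivalent_def
    using U V S T P by (simp add: UV VU PU UQ QV VP ST P'_eq right_mult_one_mat)
qed

(* For r < s, C = 1 - proj_mat n s makes V + C a left inverse of U + C, whose row r is zero. *)
lemma proj_mats_equivalent_not_less:
  fixes U V :: "'a::idom mat"
  assumes eq: "idempotents_equivalent n (proj_mat n r) (proj_mat n s) U V" and rs: "r < s" "s \<le> n"
  shows False
proof -
  note assoc = assoc_mult_mat[of _ n n _ n _ n]
  from eq have U: "U \<in> carrier_mat n n" and V: "V \<in> carrier_mat n n"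
    and VU: "V * U = proj_mat n s" and PU: "proj_mat n r * U = U" and VP: "V * proj_mat n r = V"
    by (auto simp: idempotents_equivalent_def)
  define C :: "'a mat" where "C = 1\<^sub>m n - proj_mat n s"
  have C: "C \<in> carrier_mat n n" by (simp add: C_def minus_carrier_mat)
  have "proj_mat n r * C = 0\<^sub>m n n" using rs
    by (simp add: C_def mult_minus_distrib_mat[of _ n n _ n] proj_mat_mult_proj_mat right_mult_one_mat)
  moreover have "V * C = V * proj_mat n r * C" by (simp add: VP)
  ultimately have VC: "V * C = 0\<^sub>m n n" using V C by (simp add: assoc right_mult_zero_mat)
  have "C * proj_mat n r = 0\<^sub>m n n" using rs
    by (simp add: C_def minus_mult_distrib_mat[of _ n n _ _ n] proj_mat_mult_proj_mat left_mult_one_mat)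
  moreover have "C * U = C * proj_mat n r * U" using C U by (simp add: assoc PU)
  ultimately have CU: "C * U = 0\<^sub>m n n" using U by (simp add: left_mult_zero_mat)
  have CC: "C * C = C" unfolding C_def by (rule compl_idempotent) (simp_all add: proj_mat_mult_proj_mat)
  have "(V + C) * (U + C) = V * U + C * U + (V * C + C * C)"
    using U V C by (simp add: add_mult_distrib_mat[of _ n n _ _ n] mult_add_distrib_mat[of _ n n _ n])
  also have "\<dots> = 1\<^sub>m n" using VU VC CU CC by (intro eq_matI) (auto simp: C_def)
  finally have "det (V + C) * det (U + C) = 1"
    using det_mult[of "V + C" n "U + C"] U V C by simp
  moreover have "det (U + C) = 0"
  proof (rule det_zero_row)
    show "U + C \<in> carrier_mat n n" using U C by simp
    show "r < n" using rs by simp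
    fix j assume "j < n"
    then show "(U + C) $$ (r, j) = 0"
      using arg_cong[OF PU, of "\<lambda>X. X $$ (r, j)"] proj_mat_mult_index[OF U, of r j r] rs U
      by (simp add: C_def)
  qed
  ultimately show False by simp
qed

lemma proj_mats_equivalent_eq:
  fixes U V :: "'a::idom mat"
  assumes "idempotents_equivalent n (proj_mat n r) (proj_mat n s) U V" "r \<le> n" "s \<le> n"
  shows "r = s"
  using proj_mats_equivalent_not_less[OF assms(1) _ assms(3)]
    proj_mats_equivalent_not_less[OF idempotents_equivalent_sym[OF assms(1)] _ assms(2)]
  by (cases r s rule: linorder_cases) auto

lemma equivalent_idempotents_similar:
  fixes P Q U V :: "'a::idom mat"
  assumes bz: "bezout_domain TYPE('a)" and eq: "idempotents_equivalent n P Q U V"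
  shows "similar_mat P Q"
proof -
  note PQ = idempotents_equivalentD[OF eq]
  obtain r where r: "r \<le> n" "similar_mat P (proj_mat n r)"
    using idempotent_similar_proj_mat[OF bz PQ(1,3)] by blast
  obtain s where s: "s \<le> n" "similar_mat Q (proj_mat n s)"
    using idempotent_similar_proj_mat[OF bz PQ(2,4)] by blast
  obtain S T where wP: "similar_mat_wit P (proj_mat n r) S T" using r(2) unfolding similar_mat_def by blast
  obtain S' T' where wQ: "similar_mat_wit Q (proj_mat n s) S' T'" using s(2) unfolding similar_mat_def by blast
  have "idempotents_equivalent n Q (proj_mat n r) (V * S) (T * U)"
    by (rule idempotents_equivalent_sym[OF idempotents_equivalent_similar_left[OF eq wP]])
  from idempotents_equivalent_similar_left[OF this wQ] have "s = r"
    using proj_mats_equivalent_eq r(1) s(1) by blast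
  then show ?thesis using r(2) s(2) similar_mat_sym similar_mat_trans by blast
qed

(* U identifies the images of Q and P, and S supplies an isomorphism of the complements. *)
lemma equivalent_idempotents_complement_inverse:
  fixes P Q U V :: "'a::comm_ring_1 mat"
  assumes eq: "idempotents_equivalent n P Q U V" and wit: "similar_mat_wit P Q S S'"
  shows "(U + S * (1\<^sub>m n - Q)) * (V + (1\<^sub>m n - Q) * S') = 1\<^sub>m n"
proof -
  note assoc = assoc_mult_mat[of _ n n _ n _ n]
  from eq have U: "U \<in> carrier_mat n n" and V: "V \<in> carrier_mat n n"
    and UV: "U * V = P" and UQ: "U * Q = U" and QV: "Q * V = V"
    by (auto simp: idempotents_equivalent_def)
  note PQ = idempotents_equivalentD[OF eq]
  from similar_mat_witD2[OF PQ(1) wit] have SS': "S * S' = 1\<^sub>m n"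
    and P_eq: "P = S * Q * S'" and S: "S \<in> carrier_mat n n" and S': "S' \<in> carrier_mat n n" by auto
  define R where "R = 1\<^sub>m n - Q"
  have R: "R \<in> carrier_mat n n" using PQ(2) by (simp add: R_def minus_carrier_mat)
  have RR: "R * R = R" unfolding R_def using PQ(2,4) by (rule compl_idempotent)
  have UR: "U * R = 0\<^sub>m n n" unfolding R_def using U PQ(2) UQ by (rule right_mult_compl_zero)
  have RV: "R * V = 0\<^sub>m n n" unfolding R_def using V PQ(2) QV by (rule left_mult_compl_zero)
  have "(U + S * R) * (V + R * S') = U * (V + R * S') + S * R * (V + R * S')"
    using U S R V S' by (intro add_mult_distrib_mat) auto
  also have "U * (V + R * S') = U * V + U * R * S'"
    using U V R S' by (simp add: mult_add_distrib_mat[of _ n n _ n] assoc)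
  also have "S * R * (V + R * S') = S * (R * V) + S * (R * R) * S'"
    using S V R S' by (simp add: mult_add_distrib_mat[of _ n n _ n] assoc)
  also have "S * (R * R) * S' = S * R * S'" by (simp add: RR)
  also have "S * R * S' = 1\<^sub>m n - P"
    using S S' PQ(2) SS' by (simp add: R_def P_eq mult_minus_distrib_mat[of _ n n _ n]
      minus_mult_distrib_mat[of _ n n _ _ n] right_mult_one_mat)
  also have "U * V + U * R * S' + (S * (R * V) + (1\<^sub>m n - P)) = 1\<^sub>m n"
    using PQ(1) S S' by (intro eq_matI) (auto simp: UV UR RV left_mult_zero_mat right_mult_zero_mat)
  finally show ?thesis unfolding R_def .
qed

lemma similar_mat_by_equivalent_idempotents:
  fixes M N :: "'a::comm_ring_1 mat"
  assumes eq: "idempotents_equivalent n P Q U V" and M: "M \<in> carrier_mat n n" and N: "N \<in> carrier_mat n n"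
    and MP: "M * P = M" and QN: "Q * N = N" and MU: "M * U = U * N" and sim: "similar_mat P Q"
  shows "similar_mat M N"
proof -
  note assoc = assoc_mult_mat[of _ n n _ n _ n]
  from eq have U: "U \<in> carrier_mat n n" and V: "V \<in> carrier_mat n n"
    by (auto simp: idempotents_equivalent_def)
  note PQ = idempotents_equivalentD[OF eq]
  obtain S S' where wit: "similar_mat_wit P Q S S'" using sim unfolding similar_mat_def by blast
  from similar_mat_witD2[OF PQ(1) wit] have S'S: "S' * S = 1\<^sub>m n"
    and P_eq: "P = S * Q * S'" and S: "S \<in> carrier_mat n n" and S': "S' \<in> carrier_mat n n" by auto
  have "P * S = S * Q * (S' * S)" using S S' PQ(2) by (simp add: P_eq assoc)
  then have PS: "P * S = S * Q" using S PQ(2) by (simp add: S'S right_mult_one_mat)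
  define R where "R = 1\<^sub>m n - Q"
  define T where "T = U + S * R"
  define T' where "T' = V + R * S'"
  have R: "R \<in> carrier_mat n n" using PQ(2) by (simp add: R_def minus_carrier_mat)
  have T: "T \<in> carrier_mat n n" and T': "T' \<in> carrier_mat n n" using U V S S' R by (simp_all add: T_def T'_def)
  have TT': "T * T' = 1\<^sub>m n"
    unfolding T_def T'_def R_def by (rule equivalent_idempotents_complement_inverse[OF eq wit])
  have QR: "Q * R = 0\<^sub>m n n" unfolding R_def using PQ(2) PQ(2) PQ(4) by (rule right_mult_compl_zero)
  have RN: "R * N = 0\<^sub>m n n" unfolding R_def using N PQ(2) QN by (rule left_mult_compl_zero)
  have "M * (S * R) = M * P * S * R" using M S R by (simp add: MP assoc)
  also have "\<dots> = M * (P * S) * R" using M S R PQ(1) by (simp add: assoc)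
  also have "\<dots> = M * S * (Q * R)" using M S R PQ(2) by (simp add: PS assoc)
  finally have MSR: "M * (S * R) = 0\<^sub>m n n" using M S by (simp add: QR right_mult_zero_mat)
  have "M * T = U * N" using M U S R N by (simp add: T_def mult_add_distrib_mat[of _ n n _ n] MU MSR)
  moreover have "T * N = U * N"
    using U S R N by (simp add: T_def add_mult_distrib_mat[of _ n n _ _ n] assoc RN right_mult_zero_mat)
  ultimately have "M * T * T' = T * N * T'" by simp
  then have "M = T * N * T'" using M T T' by (simp add: assoc TT' right_mult_one_mat)
  then show ?thesis
    using M N T T' TT' mat_mult_left_right_inverse_comm[OF T T' TT'] by (intro similar_matI[of _ _ T T' n]) auto
qed

section \<open>Group and Drazin inverses\<close>

definition is_group_inverse :: "nat \<Rightarrow> 'a::comm_ring_1 mat \<Rightarrow> 'a mat \<Rightarrow> bool" where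
  "is_group_inverse n M X \<longleftrightarrow> X \<in> carrier_mat n n \<and> M * X = X * M \<and> X * M * X = X \<and> M ^\<^sub>m 2 * X = M"

lemma group_inverseD:
  assumes M: "M \<in> carrier_mat n n" and g: "is_group_inverse n M X"
  shows "X \<in> carrier_mat n n" "M * X = X * M" "X * M * X = X" "M * M * X = M" "M * X * M = M"
    "M * X * (M * X) = M * X"
proof -
  note assoc = assoc_mult_mat[of _ n n _ n _ n]
  from g M show X: "X \<in> carrier_mat n n" and XM: "M * X = X * M" and XMX: "X * M * X = X"
    and MMX: "M * M * X = M" by (auto simp: is_group_inverse_def numeral_2_eq_2)
  show MXM: "M * X * M = M" using M X MMX by (simp add: assoc flip: XM)
  show "M * X * (M * X) = M * X" using M X by (simp add: MXM flip: assoc)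
qed

lemma group_inverse_product_factor:
  fixes A B N X :: "'a::comm_ring_1 mat"
  assumes A: "A \<in> carrier_mat n n" and B: "B \<in> carrier_mat n n" and N: "N \<in> carrier_mat n n"
    and ABA: "A * B * A = A * N" and gX: "is_group_inverse n (A * B) X"
  shows "A * B * X = A * (N * (B * X * X))"
proof -
  note assoc = assoc_mult_mat[of _ n n _ n _ n]
  define M where "M = A * B"
  have M: "M \<in> carrier_mat n n" using A B by (simp add: M_def)
  note gM = group_inverseD[OF M gX[folded M_def]]
  have MA: "M * A = A * N" using ABA by (simp add: M_def)
  have "M * X = M * X * (M * X)" using gM(6) by simp
  also have "\<dots> = M * (X * M) * X" using M gM(1) by (simp add: assoc)
  also have "\<dots> = M * (M * X) * X" by (simp flip: gM(2))
  also have "\<dots> = M * A * B * X * X" using M gM(1) A B by (simp add: M_def assoc)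
  also have "\<dots> = A * (N * (B * X * X))" using A B N gM(1) by (simp add: MA assoc)
  finally show ?thesis by (simp only: M_def)
qed

lemma group_inverse_products_intertwine:
  fixes A B C Y :: "'a::comm_ring_1 mat"
  assumes A: "A \<in> carrier_mat n n" and B: "B \<in> carrier_mat n n" and C: "C \<in> carrier_mat n n"
    and ABA: "A * B * A = A * C * A" and gY: "is_group_inverse n (C * A) Y"
  shows "A * B * (A * (C * A * Y)) = A * (C * A * Y) * (C * A)"
proof -
  note assoc = assoc_mult_mat[of _ n n _ n _ n]
  define N where "N = C * A"
  have N: "N \<in> carrier_mat n n" using A C by (simp add: N_def)
  note gN = group_inverseD[OF N gY[folded N_def]]
  have MA: "A * B * A = A * N" using ABA A C by (simp add: N_def assoc)
  have "A * B * (A * (N * Y)) = A * B * A * (N * Y)" using A B N gN(1) by (simp add: assoc)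
  also have "\<dots> = A * N * (N * Y)" by (simp only: MA)
  also have "\<dots> = A * (N * N * Y)" using A N gN(1) by (simp add: assoc)
  also have "\<dots> = A * (N * Y * N)" by (simp add: gN(4,5))
  also have "\<dots> = A * (N * Y) * N" using A N gN(1) by (simp add: assoc)
  finally show ?thesis by (simp only: N_def)
qed

lemma products_equivalent_idempotents:
  fixes A B C X Y :: "'a::comm_ring_1 mat"
  assumes A: "A \<in> carrier_mat n n" and B: "B \<in> carrier_mat n n" and C: "C \<in> carrier_mat n n"
    and ABA: "A * B * A = A * C * A"
    and gX: "is_group_inverse n (A * B) X" and gY: "is_group_inverse n (C * A) Y"
  shows "idempotents_equivalent n (A * B * X) (C * A * Y) (A * (C * A * Y)) (Y * C * (A * B * X))"
proof -
  note assoc = assoc_mult_mat[of _ n n _ n _ n]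
  define M N where "M = A * B" and "N = C * A"
  have M: "M \<in> carrier_mat n n" and N: "N \<in> carrier_mat n n" using A B C by (simp_all add: M_def N_def)
  note gM = group_inverseD[OF M gX[folded M_def]] and gN = group_inverseD[OF N gY[folded N_def]]
  have X: "X \<in> carrier_mat n n" and Y: "Y \<in> carrier_mat n n" using gM(1) gN(1) .
  define P Q R where "P = M * X" and "Q = N * Y" and "R = B * X * X"
  have P: "P \<in> carrier_mat n n" and Q: "Q \<in> carrier_mat n n" and R: "R \<in> carrier_mat n n"
    using M N X Y B by (simp_all add: P_def Q_def R_def)
  have MA: "M * A = A * N" using ABA A B C by (simp add: M_def N_def assoc)
  have "A * B * A = A * N" using ABA A C by (simp add: N_def assoc)
  then have "A * B * X = A * (N * (B * X * X))" by (rule group_inverse_product_factor[OF A B N _ gX])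
  then have P_eq: "P = A * (N * R)" by (simp add: P_def M_def R_def)
  have PP: "P * P = P" and QQ: "Q * Q = Q" using gM(6) gN(6) by (simp_all add: P_def Q_def)
  have PM: "P * M = M" and QN: "Q * N = N" using gM(5) gN(5) by (simp_all add: P_def Q_def)
  have YN: "Y * N = Q" using gN(2) by (simp add: Q_def)
  define U V where "U = A * Q" and "V = Y * C * P"
  have U: "U \<in> carrier_mat n n" and V: "V \<in> carrier_mat n n" using A Q Y C P by (simp_all add: U_def V_def)
  have "V = Y * N * (N * R)" using Y C A N R by (simp add: V_def P_eq N_def assoc)
  then have V_eq: "V = N * R" using Q N R by (simp add: YN QN flip: assoc)
  have "U * V = A * (Q * N) * R" using A Q N R by (simp add: U_def V_eq assoc)
  then have UV: "U * V = P" using A N R by (simp add: QN P_eq assoc)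
  have "P * U = P * (A * N) * Y" using P A N Y by (simp add: U_def Q_def assoc)
  also have "\<dots> = P * (M * A) * Y" by (simp add: MA)
  also have "\<dots> = (P * M) * A * Y" using P M A Y by (simp add: assoc)
  also have "\<dots> = U" using M A N Y by (simp add: PM MA U_def Q_def assoc)
  finally have PU: "P * U = U" .
  have "V * U = Y * C * (P * U)" using Y C P U by (simp add: V_def assoc)
  also have "\<dots> = Y * C * U" by (simp only: PU)
  also have "\<dots> = Y * N * Q" using Y C A Q by (simp add: U_def N_def assoc)
  finally have VU: "V * U = Q" using Q by (simp add: YN QQ)
  have UQ: "U * Q = U" using A Q by (simp add: U_def assoc QQ)
  have QV: "Q * V = V" using Q N R by (simp add: V_eq QN flip: assoc)
  have VP: "V * P = V" using Y C P by (simp add: V_def assoc PP)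
  have "idempotents_equivalent n P Q U V"
    using U V UV VU PU UQ QV VP unfolding idempotents_equivalent_def by blast
  then show ?thesis by (simp only: U_def V_def P_def Q_def M_def N_def)
qed

lemma group_invertible_products_similar:
  fixes A B C X Y :: "'a::idom mat"
  assumes bz: "bezout_domain TYPE('a)"
    and A: "A \<in> carrier_mat n n" and B: "B \<in> carrier_mat n n" and C: "C \<in> carrier_mat n n"
    and ABA: "A * B * A = A * C * A"
    and gX: "is_group_inverse n (A * B) X" and gY: "is_group_inverse n (C * A) Y"
  shows "similar_mat (A * B) (C * A)"
proof -
  have AB: "A * B \<in> carrier_mat n n" and CA: "C * A \<in> carrier_mat n n" using A B C by simp_all
  note eq = products_equivalent_idempotents[OF A B C ABA gX gY]
    and intertwine = group_inverse_products_intertwine[OF A B C ABA gY]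
  have "A * B * (A * B * X) = A * B"
    using group_inverseD(4)[OF AB gX] group_inverseD(1)[OF AB gX] AB by (simp add: assoc_mult_mat)
  moreover have "C * A * Y * (C * A) = C * A" using group_inverseD(5)[OF CA gY] .
  ultimately show ?thesis
    using similar_mat_by_equivalent_idempotents[OF eq AB CA _ _ intertwine] equivalent_idempotents_similar[OF bz eq]
    by blast
qed

lemma pow_mat_Suc_left: "A \<in> carrier_mat n n \<Longrightarrow> A ^\<^sub>m Suc k = A * A ^\<^sub>m k"
  by (induction k) (simp_all add: assoc_mult_mat[of _ n n _ n _ n] left_mult_one_mat right_mult_one_mat)

lemma group_inverse_mult_pow:
  assumes M: "M \<in> carrier_mat n n" and g: "is_group_inverse n M X"
  shows "M * X * M ^\<^sub>m Suc j = M ^\<^sub>m Suc j" "X * M ^\<^sub>m Suc j = M * X * M ^\<^sub>m j"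
proof -
  note assoc = assoc_mult_mat[of _ n n _ n _ n]
  note gM = group_inverseD[OF M g]
  show "M * X * M ^\<^sub>m Suc j = M ^\<^sub>m Suc j"
    using M gM(1) by (simp add: pow_mat_Suc_left[OF M] gM(5) del: pow_mat.simps(2) flip: assoc)
  show "X * M ^\<^sub>m Suc j = M * X * M ^\<^sub>m j"
    using M gM(1) by (simp add: pow_mat_Suc_left[OF M] del: pow_mat.simps(2) flip: assoc gM(2))
qed

(* Multiplication by the group inverse lowers the index of a Drazin inverse by one. *)
lemma drazin_index_reduction:
  assumes M: "M \<in> carrier_mat n n" and g: "is_group_inverse n M X" and Y: "Y \<in> carrier_mat n n"
  shows "M ^\<^sub>m Suc k * Y = M * X * M ^\<^sub>m k \<Longrightarrow> M * Y = M * X"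
proof (induction k)
  case 0
  then show ?case using M Y group_inverseD(1)[OF M g] by (simp add: left_mult_one_mat right_mult_one_mat)
next
  case (Suc k)
  note assoc = assoc_mult_mat[of _ n n _ n _ n]
  have X: "X \<in> carrier_mat n n" using group_inverseD(1)[OF M g] .
  have "M ^\<^sub>m Suc k * Y = X * M ^\<^sub>m Suc (Suc k) * Y"
    by (simp add: group_inverse_mult_pow[OF M g] del: pow_mat.simps(2))
  also have "\<dots> = X * (M * X * M ^\<^sub>m Suc k)"
    using M X Y by (simp add: assoc Suc.prems del: pow_mat.simps(2))
  also have "\<dots> = M * X * M ^\<^sub>m k"
    using M X by (simp add: group_inverseD(3)[OF M g] group_inverse_mult_pow(2)[OF M g]
      del: pow_mat.simps(2) flip: assoc)
  finally show ?case by (rule Suc.IH)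
qed

lemma drazin_inverse_eq_group_inverse:
  assumes M: "M \<in> carrier_mat n n" and g: "is_group_inverse n M X" and d: "is_drazin_inverse n M Y"
  shows "Y = X"
proof -
  note assoc = assoc_mult_mat[of _ n n _ n _ n]
  note gM = group_inverseD[OF M g]
  obtain m where Y: "Y \<in> carrier_mat n n" and MY: "M * Y = Y * M" and YMY: "Y * M * Y = Y"
    and pw: "M ^\<^sub>m (m + 1) * Y = M ^\<^sub>m m"
    using d unfolding is_drazin_inverse_def by blast
  have "M ^\<^sub>m Suc m * Y = M * X * M ^\<^sub>m Suc m * Y"
    by (simp add: group_inverse_mult_pow(1)[OF M g] del: pow_mat.simps(2))
  also have "\<dots> = M * X * M ^\<^sub>m m" using M Y gM(1) pw by (simp add: assoc del: pow_mat.simps(2))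
  finally have MYX: "M * Y = M * X" by (rule drazin_index_reduction[OF M g Y])
  have "Y = Y * M * Y" using YMY by simp
  also have "\<dots> = (M * Y) * Y" by (simp add: MY)
  also have "\<dots> = X * (M * X)" using M Y gM(1) by (simp add: MYX gM(2) assoc)
  also have "\<dots> = X" using M gM(1) gM(3) by (simp add: assoc)
  finally show ?thesis .
qed

lemma drazin_inv_eq_group_inverse:
  assumes M: "M \<in> carrier_mat n n" and g: "is_group_inverse n M X"
  shows "drazin_inv n M = X"
  unfolding drazin_inv_def
proof (rule the_equality)
  show "is_drazin_inverse n M X"
    using g M unfolding is_drazin_inverse_def is_group_inverse_def
    by (intro conjI exI[of _ 1]) (auto simp: numeral_2_eq_2)
qed (rule drazin_inverse_eq_group_inverse[OF M g])

theorem corollary3p6: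
  fixes A B C :: "'a::idom mat" and n :: nat
  assumes "bezout_domain TYPE('a)"
    and "A \<in> carrier_mat n n" and "B \<in> carrier_mat n n" and "C \<in> carrier_mat n n"
    and "A * B * A = A * C * A"
    and "group_invertible n (A * B)" and "group_invertible n (C * A)"
  shows "similar_mat ((A * B) ^\<^sub>m 2 * drazin_inv n (A * B))
                     ((C * A) ^\<^sub>m 2 * drazin_inv n (C * A))"
proof -
  obtain X where X: "is_group_inverse n (A * B) X"
    using assms(6) unfolding group_invertible_def is_group_inverse_def by blast
  obtain Y where Y: "is_group_inverse n (C * A) Y"
    using assms(7) unfolding group_invertible_def is_group_inverse_def by blast
  have AB: "A * B \<in> carrier_mat n n" and CA: "C * A \<in> carrier_mat n n" using assms(2-4) by simp_all
  have "(A * B) ^\<^sub>m 2 * drazin_inv n (A * B) = A * B"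
    using X by (simp add: drazin_inv_eq_group_inverse[OF AB X] is_group_inverse_def)
  moreover have "(C * A) ^\<^sub>m 2 * drazin_inv n (C * A) = C * A"
    using Y by (simp add: drazin_inv_eq_group_inverse[OF CA Y] is_group_inverse_def)
  ultimately show ?thesis using group_invertible_products_similar[OF assms(1-5) X Y] by simp
qed

end
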